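(* Let $\mathcal{S}=D_S\cup A\cup B$ with $D_S=\{0_20_2\rhd'\to 0_3\rhd',\ 1_20_2\rhd'\to\rhd',\ 1_2\rhd'\to2_3\rhd'\}$, and let $\mathcal{S}_1=\mathcal{S}\setminus\{0_20_2\rhd'\to0_3\rhd'\}$ and $\mathcal{S}_2=\mathcal{S}\setminus\{1_20_2\rhd'\to\rhd'\}$. Then (1) $\mathcal{S}_1$ is terminating if and only if every nonconvergent $S$-trajectory contains some $n\equiv1\pmod 8$; (2) $\mathcal{S}_2$ is terminating if and only if every nonconvergent $S$-trajectory contains some $n\equiv5\pmod8$.
   Context: $\mathbb{N}_{\mathrm{odd}}=\{1,3,5,\dots\}$ and $S:\mathbb{N}_{\mathrm{odd}}\to\mathbb{N}_{\mathrm{odd}}$ is $S(n)=(3n+1)/4$ if $n\equiv1\pmod8$, $S(n)=(n-1)/4$ if $n\equiv5\pmod 8$, $S(n)=(3n+1)/2$ if $n\equiv3\pmod4$. The $S$-trajectory of $n$ is $(n,S(n),S^2(n),\dots)$; it is nonconvergent if it does not contain $1$. An SRS induces $u\ell v\to urv$; terminating means no infinite rewrite sequence. Alphabet $\{0_2,1_2,0_3,1_3,2_3,\lhd,\rhd'\}$ (intended reading $\rhd'(x)=2x+1$); $A=\{0_20_3\to0_30_2,\ 0_21_3\to0_31_2,\ 0_22_3\to1_30_2,\ 1_20_3\to1_31_2,\ 1_21_3\to2_30_2,\ 1_22_3\to2_31_2\}$; $B=\{\lhd0_3\to\lhd1_2,\ \lhd1_3\to\lhd0_20_2,\ \lhd2_3\to\lhd0_21_2\}$.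 *)

theory Defs
  imports Main
begin

definition S :: "nat \<Rightarrow> nat" where
  "S n = (if n mod 8 = 1 then (3 * n + 1) div 4
          else if n mod 8 = 5 then (n - 1) div 4
          else (3 * n + 1) div 2)"

definition traj_contains :: "nat \<Rightarrow> nat \<Rightarrow> bool" where
  "traj_contains n m \<longleftrightarrow> (\<exists>k. (S ^^ k) n = m)"

definition nonconvergent :: "nat \<Rightarrow> bool" where
  "nonconvergent n \<longleftrightarrow> \<not> traj_contains n 1"

datatype sym = Z2 | O2 | Z3 | O3 | T3 | Lhd | Rhd'

type_synonym srs = "(sym list \<times> sym list) set"

definition rstep :: "srs \<Rightarrow> sym list \<Rightarrow> sym list \<Rightarrow> bool" where
  "rstep R x y \<longleftrightarrow> (\<exists>u v l r. (l, r) \<in> R \<and> x = u @ l @ v \<and> y = u @ r @ v)"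

definition terminating :: "srs \<Rightarrow> bool" where
  "terminating R \<longleftrightarrow> \<not> (\<exists>f. \<forall>i. rstep R (f i) (f (Suc i)))"

definition A_rules :: srs where
  "A_rules = {([Z2, Z3], [Z3, Z2]), ([Z2, O3], [Z3, O2]), ([Z2, T3], [O3, Z2]),
              ([O2, Z3], [O3, O2]), ([O2, O3], [T3, Z2]), ([O2, T3], [T3, O2])}"

definition B_rules :: srs where
  "B_rules = {([Lhd, Z3], [Lhd, O2]), ([Lhd, O3], [Lhd, Z2, Z2]), ([Lhd, T3], [Lhd, Z2, O2])}"

definition DS_rules :: srs where
  "DS_rules = {([Z2, Z2, Rhd'], [Z3, Rhd']), ([O2, Z2, Rhd'], [Rhd']), ([O2, Rhd'], [T3, Rhd'])}"

definition SS :: srs where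
  "SS = DS_rules \<union> A_rules \<union> B_rules"

definition SS1 :: srs where
  "SS1 = SS - {([Z2, Z2, Rhd'], [Z3, Rhd'])}"

definition SS2 :: srs where
  "SS2 = SS - {([O2, Z2, Rhd'], [Rhd'])}"

end

theory Submission
  imports Defs
begin

text \<open>
  Read a word \<open>\<lhd> w\<close> as a number: \<open>\<lhd>\<close> writes a leading 1, the symbols \<open>0\<^sub>2, 1\<^sub>2\<close> append a
  binary digit, \<open>0\<^sub>3, 1\<^sub>3, 2\<^sub>3\<close> a ternary digit, and \<open>\<rhd>'\<close> appends the binary digit 1.
  The rules of A and B preserve this value: A moves ternary digits to the left past binary ones,
  and B turns a ternary digit next to \<open>\<lhd>\<close> into binary ones; together they terminate.
  Each rule of \<open>D\<^sub>S\<close> maps the value of \<open>\<lhd> w \<rhd>'\<close> to its image under S, the three rules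
  covering the odd numbers that are 1 mod 8, 5 mod 8 and 3 mod 4 respectively.
  Hence an infinite rewrite sequence applies \<open>D\<^sub>S\<close> infinitely often and follows an S-trajectory
  that never reaches 1 and never meets the residue whose rule has been removed; conversely such
  a trajectory is simulated by an infinite rewrite sequence starting from its binary expansion.
  Words with several \<open>\<rhd>'\<close> split into blocks that rewrite independently, and words
  without \<open>\<lhd>\<close> terminate because \<open>D\<^sub>S\<close> then only deletes binary digits.
\<close>

section \<open>Words as numbers\<close>

fun sym_val :: "nat \<Rightarrow> sym \<Rightarrow> nat" where
  "sym_val x Z2 = 2 * x"
| "sym_val x O2 = 2 * x + 1"
| "sym_val x Z3 = 3 * x"
| "sym_val x O3 = 3 * x + 1"
| "sym_val x T3 = 3 * x + 2"
| "sym_val x Lhd = 1"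
| "sym_val x Rhd' = 2 * x + 1"

definition word_val :: "sym list \<Rightarrow> nat" where
  "word_val w = foldl sym_val 0 w"

lemma word_val_append: "word_val (u @ v) = foldl sym_val (word_val u) v"
  by (simp add: word_val_def)

lemma word_val_Lhd_Cons: "word_val (Lhd # w) = foldl sym_val 1 w"
  by (simp add: word_val_def)

lemma word_val_Cons_append: "word_val (s # u @ v) = foldl sym_val (word_val (s # u)) v"
  using word_val_append[of "s # u" v] by simp

lemma foldl_sym_val_pos: "1 \<le> a \<Longrightarrow> 1 \<le> foldl sym_val a w"
proof (induction w arbitrary: a)
  case (Cons s w)
  have "1 \<le> sym_val a s" using Cons.prems by (cases s) auto
  then show ?case using Cons.IH by simp
qed simp

lemma word_val_pos:
  assumes "Lhd \<in> set w" shows "1 \<le> word_val w"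
proof -
  obtain u v where "w = u @ Lhd # v" using assms by (meson split_list)
  then show ?thesis using foldl_sym_val_pos[of 1 v] by (simp add: word_val_append)
qed

lemma S_8a_plus_1: "S (8 * a + 1) = 6 * a + 1"
  unfolding S_def by simp

lemma S_8a_plus_5: "S (8 * a + 5) = 2 * a + 1"
  unfolding S_def by simp

lemma S_4a_plus_3: "S (4 * a + 3) = 6 * a + 5"
proof -
  have "(4 * a + 3) mod 8 \<noteq> 1" "(4 * a + 3) mod 8 \<noteq> 5" by presburger+
  then show ?thesis unfolding S_def by simp
qed

lemma traj_contains_funpow: "traj_contains ((S ^^ k) n) m \<Longrightarrow> traj_contains n m"
  unfolding traj_contains_def by (metis funpow_add comp_apply)

lemma nonconvergent_funpow: "nonconvergent n \<Longrightarrow> nonconvergent ((S ^^ k) n)"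
  unfolding nonconvergent_def using traj_contains_funpow by blast

lemma nonconvergent_not_1_3_5:
  assumes "nonconvergent n" shows "n \<notin> {1, 3, 5}"
proof -
  have "S 3 = 5" "S 5 = 1" unfolding S_def by simp_all
  then have "(S ^^ 2) 3 = 1" "(S ^^ 1) 5 = 1" "(S ^^ 0) 1 = 1" by (simp_all add: numeral_2_eq_2)
  then show ?thesis using assms unfolding nonconvergent_def traj_contains_def by blast
qed

lemma S_chain_nonconvergent:
  assumes "\<And>k. t (Suc k) = S (t k) \<and> odd (t k) \<and> t k \<noteq> 1 \<and> t k mod 8 \<noteq> c"
  shows "odd (t 0) \<and> nonconvergent (t 0) \<and> \<not> (\<exists>m. traj_contains (t 0) m \<and> m mod 8 = c)"
proof -
  have t: "t k = (S ^^ k) (t 0)" for k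
    by (induction k) (use assms in auto)
  then show ?thesis
    using assms unfolding nonconvergent_def traj_contains_def by metis
qed

definition num_bin :: "sym list \<Rightarrow> nat" where
  "num_bin w = length (filter (\<lambda>s. s \<in> {Z2, O2}) w)"

definition num_ter :: "sym list \<Rightarrow> nat" where
  "num_ter w = length (filter (\<lambda>s. s \<in> {Z3, O3, T3}) w)"

fun bin_ter_inversions :: "sym list \<Rightarrow> nat" where
  "bin_ter_inversions [] = 0"
| "bin_ter_inversions (s # w) = (if s \<in> {Z2, O2} then num_ter w else 0) + bin_ter_inversions w"

lemma num_bin_append [simp]: "num_bin (u @ v) = num_bin u + num_bin v"
  by (simp add: num_bin_def)

lemma num_ter_append [simp]: "num_ter (u @ v) = num_ter u + num_ter v"
  by (simp add: num_ter_def)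

lemma bin_ter_inversions_append:
  "bin_ter_inversions (u @ v) = bin_ter_inversions u + num_bin u * num_ter v + bin_ter_inversions v"
  by (induction u) (auto simp: num_bin_def)

lemma SS_eq: "SS =
  {([Z2, Z2, Rhd'], [Z3, Rhd']), ([O2, Z2, Rhd'], [Rhd']), ([O2, Rhd'], [T3, Rhd']),
   ([Z2, Z3], [Z3, Z2]), ([Z2, O3], [Z3, O2]), ([Z2, T3], [O3, Z2]),
   ([O2, Z3], [O3, O2]), ([O2, O3], [T3, Z2]), ([O2, T3], [T3, O2]),
   ([Lhd, Z3], [Lhd, O2]), ([Lhd, O3], [Lhd, Z2, Z2]), ([Lhd, T3], [Lhd, Z2, O2])}"
  by (auto simp: SS_def DS_rules_def A_rules_def B_rules_def)

lemma SS_rule_props: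
  assumes "(l, r) \<in> SS"
  shows "l \<noteq> []" "r \<noteq> []" "count_list l Rhd' = count_list r Rhd'"
    "last l = Rhd' \<longleftrightarrow> last r = Rhd'" "Rhd' \<notin> set (butlast l)" "Lhd \<in> set l \<longleftrightarrow> Lhd \<in> set r"
  using assms unfolding SS_eq by auto

lemma A_rule_props:
  assumes "(l, r) \<in> A_rules"
  shows "num_ter r = num_ter l" "num_bin r = num_bin l" "bin_ter_inversions r < bin_ter_inversions l"
    "foldl sym_val a r = foldl sym_val a l"
  using assms by (auto simp: A_rules_def num_ter_def num_bin_def)

lemma B_rule_props:
  assumes "(l, r) \<in> B_rules"
  shows "num_ter r < num_ter l" "foldl sym_val a r = foldl sym_val a l" "Lhd \<in> set l"
  using assms by (auto simp: B_rules_def num_ter_def)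

lemma DS_rule_props:
  assumes "(l, r) \<in> DS_rules"
  shows "num_bin r < num_bin l" "Lhd \<notin> set l" "Rhd' \<in> set l"
  using assms by (auto simp: DS_rules_def num_bin_def)

lemma DS_rule_simulates_S:
  assumes "(l, r) \<in> DS_rules" "1 \<le> a"
  shows "foldl sym_val a r = S (foldl sym_val a l) \<and> odd (foldl sym_val a l) \<and> foldl sym_val a l \<noteq> 1"
proof -
  from assms(1) consider
      "foldl sym_val a l = 8 * a + 1" "foldl sym_val a r = 6 * a + 1"
    | "foldl sym_val a l = 8 * a + 5" "foldl sym_val a r = 2 * a + 1"
    | "foldl sym_val a l = 4 * a + 3" "foldl sym_val a r = 6 * a + 5"
    by (auto simp: DS_rules_def)
  then show ?thesis
    using assms(2) S_8a_plus_1[of a] S_8a_plus_5[of a] S_4a_plus_3[of a] by cases auto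
qed

lemma DS_rule_residue:
  assumes "(l, r) \<in> DS_rules"
  shows "foldl sym_val a l mod 8 = 1 \<Longrightarrow> (l, r) = ([Z2, Z2, Rhd'], [Z3, Rhd'])"
    and "foldl sym_val a l mod 8 = 5 \<Longrightarrow> (l, r) = ([O2, Z2, Rhd'], [Rhd'])"
proof -
  have "(8 * a + 5) mod 8 = 5" "(8 * a + 1) mod 8 = 1" "(4 * a + 3) mod 8 \<noteq> 1" "(4 * a + 3) mod 8 \<noteq> 5"
    by presburger+
  moreover have "(l, r) = ([Z2, Z2, Rhd'], [Z3, Rhd']) \<and> foldl sym_val a l = 8 * a + 1
    \<or> (l, r) = ([O2, Z2, Rhd'], [Rhd']) \<and> foldl sym_val a l = 8 * a + 5
    \<or> foldl sym_val a l = 4 * a + 3"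
    using assms by (auto simp: DS_rules_def)
  ultimately show "foldl sym_val a l mod 8 = 1 \<Longrightarrow> (l, r) = ([Z2, Z2, Rhd'], [Z3, Rhd'])"
    and "foldl sym_val a l mod 8 = 5 \<Longrightarrow> (l, r) = ([O2, Z2, Rhd'], [Rhd'])"
    by auto
qed

lemma rstepI: "(l, r) \<in> R \<Longrightarrow> rstep R (u @ l @ v) (u @ r @ v)"
  unfolding rstep_def by blast

lemma rstep_mono: "R \<subseteq> R' \<Longrightarrow> rstep R x y \<Longrightarrow> rstep R' x y"
  unfolding rstep_def by blast

lemma rstep_Un: "rstep (R \<union> R') x y \<longleftrightarrow> rstep R x y \<or> rstep R' x y"
  unfolding rstep_def by blast

lemma rstep_SS_invariants:
  assumes "rstep SS x y"
  shows "count_list y Rhd' = count_list x Rhd'" "x \<noteq> []" "y \<noteq> []"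
    "last y = Rhd' \<longleftrightarrow> last x = Rhd'" "Lhd \<in> set y \<longleftrightarrow> Lhd \<in> set x"
proof -
  obtain u v l r where lr: "(l, r) \<in> SS" "x = u @ l @ v" "y = u @ r @ v"
    using assms unfolding rstep_def by blast
  note P = SS_rule_props[OF lr(1)]
  show "count_list y Rhd' = count_list x Rhd'" "x \<noteq> []" "y \<noteq> []" "Lhd \<in> set y \<longleftrightarrow> Lhd \<in> set x"
    using lr P by auto
  show "last y = Rhd' \<longleftrightarrow> last x = Rhd'"
    using lr P by (auto simp: last_append)
qed

lemma A_B_step_decreases:
  assumes "rstep (A_rules \<union> B_rules) x y"
  shows "(y, x) \<in> measures [num_ter, bin_ter_inversions]"
proof -
  obtain u v l r where lr: "(l, r) \<in> A_rules \<union> B_rules" "x = u @ l @ v" "y = u @ r @ v"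
    using assms unfolding rstep_def by blast
  then consider "(l, r) \<in> A_rules" | "(l, r) \<in> B_rules" by blast
  then show ?thesis
  proof cases
    case 1
    then show ?thesis using lr A_rule_props[OF 1] by (simp add: bin_ter_inversions_append)
  next
    case 2
    then show ?thesis using lr B_rule_props[OF 2] by simp
  qed
qed

lemma Lhd_free_step_decreases:
  assumes "rstep SS x y" "Lhd \<notin> set x"
  shows "(y, x) \<in> measures [num_bin, bin_ter_inversions]"
proof -
  obtain u v l r where lr: "(l, r) \<in> SS" "x = u @ l @ v" "y = u @ r @ v"
    using assms unfolding rstep_def by blast
  have "(l, r) \<notin> B_rules" using B_rule_props(3) assms(2) lr(2) by auto
  then consider "(l, r) \<in> A_rules" | "(l, r) \<in> DS_rules" using lr(1) unfolding SS_def by blast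
  then show ?thesis
  proof cases
    case 1
    then show ?thesis using lr A_rule_props[OF 1] by (simp add: bin_ter_inversions_append)
  next
    case 2
    then show ?thesis using lr DS_rule_props[OF 2] by simp
  qed
qed

lemma no_descending_chain_measures: "\<not> (\<forall>i. (f (Suc i), f i) \<in> measures ms)"
  using wf_measures[of ms] unfolding wf_iff_no_infinite_down_chain by blast

definition rewrite_chain :: "srs \<Rightarrow> (nat \<Rightarrow> sym list) \<Rightarrow> bool" where
  "rewrite_chain R f \<longleftrightarrow> (\<forall>i. rstep R (f i) (f (Suc i)))"

lemma terminating_iff_no_rewrite_chain: "terminating R \<longleftrightarrow> \<not> (\<exists>f. rewrite_chain R f)"
  by (simp add: terminating_def rewrite_chain_def)

lemma rewrite_chain_mono: "rewrite_chain R f \<Longrightarrow> R \<subseteq> R' \<Longrightarrow> rewrite_chain R' f"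
  unfolding rewrite_chain_def using rstep_mono by blast

lemma rewrite_chain_invariant:
  assumes "rewrite_chain R f" "P (f 0)" "\<And>x y. rstep R x y \<Longrightarrow> P x \<Longrightarrow> P y"
  shows "P (f i)"
  by (induction i) (use assms in \<open>auto simp: rewrite_chain_def\<close>)

definition no_inner_rhd :: "sym list \<Rightarrow> bool" where
  "no_inner_rhd w \<longleftrightarrow> Rhd' \<notin> set (butlast w)"

lemma no_inner_rhd_iff_count:
  assumes "w \<noteq> []"
  shows "no_inner_rhd w \<longleftrightarrow> count_list w Rhd' = (if last w = Rhd' then 1 else 0)"
proof -
  have "count_list w Rhd' = count_list (butlast w) Rhd' + (if last w = Rhd' then 1 else 0)"
    using append_butlast_last_id[OF assms] count_list_append[of "butlast w" "[last w]" Rhd'] by simp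
  then show ?thesis by (simp add: no_inner_rhd_def count_list_0_iff)
qed

lemma rstep_SS_no_inner_rhd:
  assumes "rstep SS x y" "no_inner_rhd x" shows "no_inner_rhd y"
  using rstep_SS_invariants[OF assms(1)] assms(2) no_inner_rhd_iff_count[of x] no_inner_rhd_iff_count[of y]
  by simp

lemma redex_in_append:
  assumes eq: "x @ y = u @ l @ v" and x: "x \<noteq> []" "last x \<notin> set (butlast l)"
  shows "(\<exists>v'. x = u @ l @ v' \<and> v = v' @ y) \<or> (\<exists>u'. y = u' @ l @ v \<and> u = x @ u')"
proof -
  from eq consider (left) us where "x = u @ us" "us @ y = l @ v" | (right) us where "x @ us = u" "y = us @ l @ v"
    unfolding append_eq_append_conv2 by blast
  then show ?thesis
  proof cases
    case left
    from left(2) consider (inside) w where "us = l @ w" "w @ y = v" | (overlap) w where "us @ w = l" "y = w @ v"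
      unfolding append_eq_append_conv2 by blast
    then show ?thesis
    proof cases
      case overlap
      have "w = [] \<or> us = []"
      proof (rule ccontr)
        assume "\<not> (w = [] \<or> us = [])"
        then have "last x \<in> set (butlast l)"
          using left(1) overlap(1) by (auto simp: butlast_append)
        then show False using x(2) by blast
      qed
      then show ?thesis using left overlap by auto
    qed (use left in auto)
  qed auto
qed

lemma rstep_append_Rhd'_cases:
  assumes R: "R \<subseteq> SS" and step: "rstep R (x @ y) z" and x: "x \<noteq> []" "last x = Rhd'"
  obtains x' where "z = x' @ y" "rstep R x x'" "x' \<noteq> []" "last x' = Rhd'"
    | y' where "z = x @ y'" "rstep R y y'"
proof -
  obtain u v l r where lr: "(l, r) \<in> R" "x @ y = u @ l @ v" "z = u @ r @ v"
    using step unfolding rstep_def by blast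
  note P = SS_rule_props[OF subsetD[OF R lr(1)]]
  from redex_in_append[OF lr(2) x(1)] x(2) P(5)
  consider (left) v' where "x = u @ l @ v'" "v = v' @ y" | (right) u' where "y = u' @ l @ v" "u = x @ u'"
    by auto
  then show thesis
  proof cases
    case left
    have "last (u @ r @ v') = Rhd'" using left(1) x P by (auto simp: last_append)
    then show thesis using that(1)[of "u @ r @ v'"] left lr P rstepI[OF lr(1)] by auto
  next
    case right
    then show thesis using that(2)[of "u' @ r @ v"] lr rstepI[OF lr(1)] by auto
  qed
qed

lemma rewrite_chain_split:
  assumes R: "R \<subseteq> SS" and f: "rewrite_chain R f"
    and f0: "f 0 = x @ y" and x: "x \<noteq> []" "last x = Rhd'"
  obtains g h where "g 0 = x" "h 0 = y" "\<And>i. f i = g i @ h i" "\<And>i. g i \<noteq> [] \<and> last (g i) = Rhd'"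
    "\<And>i. (rstep R (g i) (g (Suc i)) \<and> h (Suc i) = h i) \<or> (g (Suc i) = g i \<and> rstep R (h i) (h (Suc i)))"
proof -
  define P where "P n p \<longleftrightarrow> f n = fst p @ snd p \<and> fst p \<noteq> [] \<and> last (fst p) = Rhd' \<and> (n = 0 \<longrightarrow> p = (x, y))"
    for n p
  define Q where "Q p p' \<longleftrightarrow> (rstep R (fst p) (fst p') \<and> snd p' = snd p) \<or> (fst p' = fst p \<and> rstep R (snd p) (snd p'))"
    for p p'
  have "\<exists>F. \<forall>n. P n (F n) \<and> Q (F n) (F (Suc n))"
  proof (rule dependent_nat_choice)
    show "\<exists>p. P 0 p" using f0 x by (auto simp: P_def)
  next
    fix p n assume "P n p"
    then have "rstep R (fst p @ snd p) (f (Suc n))" "fst p \<noteq> []" "last (fst p) = Rhd'"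
      using f unfolding P_def rewrite_chain_def by metis+
    then show "\<exists>p'. P (Suc n) p' \<and> Q p p'"
      by (cases rule: rstep_append_Rhd'_cases[OF R]) (force simp: P_def Q_def)+
  qed
  then obtain F where "\<And>n. P n (F n)" "\<And>n. Q (F n) (F (Suc n))" by blast
  then show thesis
    using that[of "\<lambda>i. fst (F i)" "\<lambda>i. snd (F i)"] unfolding P_def Q_def by simp
qed

lemma stutter_until_step:
  assumes s: "\<forall>i. s (Suc i) = s i \<or> P (s i) (s (Suc i))"
  shows "i \<le> j \<Longrightarrow> P (s j) (s (Suc j)) \<Longrightarrow> \<exists>j'\<ge>i. P (s j') (s (Suc j')) \<and> s j' = s i"
proof (induction "j - i" arbitrary: i)
  case (Suc d)
  show ?case
  proof (cases "P (s i) (s (Suc i))")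
    case False
    then have "s (Suc i) = s i" using s by blast
    moreover have "\<exists>j'\<ge>Suc i. P (s j') (s (Suc j')) \<and> s j' = s (Suc i)"
      using Suc.hyps(1)[of "Suc i"] Suc.hyps(2) Suc.prems False by auto
    ultimately show ?thesis by (metis Suc_leD)
  qed auto
qed auto

lemma stuttering_chain:
  assumes s: "\<forall>i. s (Suc i) = s i \<or> P (s i) (s (Suc i))"
    and inf: "\<forall>i. \<exists>j\<ge>i. P (s j) (s (Suc j))"
  obtains t where "\<And>k. \<exists>i. t k = s i" "\<And>k. P (t k) (t (Suc k))"
proof -
  have "\<forall>i. \<exists>j. j \<ge> i \<and> P (s j) (s (Suc j)) \<and> s j = s i"
    using stutter_until_step[OF s] inf by blast
  then obtain next_step where step:
    "\<And>i. next_step i \<ge> i \<and> P (s (next_step i)) (s (Suc (next_step i))) \<and> s (next_step i) = s i"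
    by metis
  define idx where "idx k = ((\<lambda>j. Suc (next_step j)) ^^ k) 0" for k
  have "P (s (next_step (idx k))) (s (next_step (idx (Suc k))))" for k
  proof -
    have "idx (Suc k) = Suc (next_step (idx k))" by (simp add: idx_def)
    then show ?thesis using step[of "idx k"] step[of "idx (Suc k)"] by metis
  qed
  then show thesis using that[of "\<lambda>k. s (next_step (idx k))"] by blast
qed

lemma exists_rewrite_chain_no_inner_rhd:
  assumes R: "R \<subseteq> SS"
  shows "rewrite_chain R f \<Longrightarrow> \<exists>f'. rewrite_chain R f' \<and> no_inner_rhd (f' 0)"
proof (induction "count_list (f 0) Rhd'" arbitrary: f rule: less_induct)
  txt \<open>Split \<open>f 0\<close> after its first \<open>\<rhd>'\<close>. Either the right part is rewritten infinitely often,
    and it has fewer \<open>\<rhd>'\<close>, or from some point on only the left part is rewritten.\<close>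
  case less
  show ?case
  proof (cases "no_inner_rhd (f 0)")
    case False
    then obtain ys zs where yz: "butlast (f 0) = ys @ Rhd' # zs" "Rhd' \<notin> set ys"
      unfolding no_inner_rhd_def by (metis split_list_first)
    define x where "x = ys @ [Rhd']"
    define y where "y = zs @ [last (f 0)]"
    have "f 0 \<noteq> []" using yz by auto
    then have f0: "f 0 = x @ y"
      using yz unfolding x_def y_def by (metis append.assoc append_Cons append_butlast_last_id append_self_conv2)
    have x: "x \<noteq> []" "last x = Rhd'" "count_list x Rhd' = 1" using yz(2) by (simp_all add: x_def)
    obtain g h where gh: "g 0 = x" "h 0 = y" "\<And>i. f i = g i @ h i" "\<And>i. g i \<noteq> [] \<and> last (g i) = Rhd'"
      "\<And>i. (rstep R (g i) (g (Suc i)) \<and> h (Suc i) = h i) \<or> (g (Suc i) = g i \<and> rstep R (h i) (h (Suc i)))"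
      using rewrite_chain_split[OF R less.prems f0 x(1,2)] by blast
    have counts: "count_list (g i) Rhd' = 1 \<and> count_list (h i) Rhd' = count_list y Rhd'" for i
    proof (induction i)
      case (Suc i)
      then show ?case using gh(5)[of i] rstep_SS_invariants(1) rstep_mono[OF R] by metis
    qed (simp add: gh(1,2) x(3))
    show ?thesis
    proof (cases "\<forall>i. \<exists>j\<ge>i. rstep R (h j) (h (Suc j))")
      case True
      obtain t where t: "\<And>k. \<exists>i. t k = h i" "\<And>k. rstep R (t k) (t (Suc k))"
        using stuttering_chain[of h "rstep R"] gh(5) True by metis
      have "count_list (t 0) Rhd' < count_list (f 0) Rhd'" using t(1)[of 0] counts f0 x(3) by auto
      then show ?thesis using less.hyps t(2) unfolding rewrite_chain_def by blast
    next
      case False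
      then obtain N where N: "\<forall>j\<ge>N. \<not> rstep R (h j) (h (Suc j))" by blast
      have "rewrite_chain R (\<lambda>i. g (N + i))"
        unfolding rewrite_chain_def using N gh(5) by (metis le_add1 add_Suc_right)
      moreover have "no_inner_rhd (g N)" using no_inner_rhd_iff_count gh(4) counts by simp
      ultimately show ?thesis by auto
    qed
  qed (use less.prems in blast)
qed

section \<open>Infinite rewrite sequences follow nonconvergent trajectories\<close>

lemma Lhd_free_no_rewrite_chain:
  assumes R: "R \<subseteq> SS" and f: "rewrite_chain R f" and L: "Lhd \<notin> set (f 0)"
  shows False
proof -
  have step: "rstep SS (f i) (f (Suc i))" for i
    using rewrite_chain_mono[OF f R] unfolding rewrite_chain_def by blast
  have "Lhd \<notin> set (f i)" for i
    by (rule rewrite_chain_invariant[OF rewrite_chain_mono[OF f R], where P = "\<lambda>w. Lhd \<notin> set w"])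
      (use L rstep_SS_invariants(5) in blast)+
  then have "(f (Suc i), f i) \<in> measures [num_bin, bin_ter_inversions]" for i
    using Lhd_free_step_decreases[OF step] by blast
  then show False using no_descending_chain_measures by blast
qed

lemma rstep_A_B_word_val: "rstep (A_rules \<union> B_rules) x y \<Longrightarrow> word_val y = word_val x"
  unfolding rstep_def using A_rule_props(4) B_rule_props(2) by (auto simp: word_val_append)

lemma rstep_DS_word_val:
  assumes "rstep (R \<inter> DS_rules) x y" "no_inner_rhd x" "Lhd \<in> set x"
  obtains l r a where "(l, r) \<in> R \<inter> DS_rules" "1 \<le> a"
    "word_val x = foldl sym_val a l" "word_val y = foldl sym_val a r"
proof -
  obtain u v l r where lr: "(l, r) \<in> R \<inter> DS_rules" "x = u @ l @ v" "y = u @ r @ v"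
    using assms(1) unfolding rstep_def by blast
  note P = DS_rule_props[OF IntD2[OF lr(1)]]
  have "v = []"
  proof (rule ccontr)
    assume "v \<noteq> []"
    then have "Rhd' \<in> set (butlast x)" using lr(2) P(3) by (simp add: butlast_append)
    then show False using assms(2) by (simp add: no_inner_rhd_def)
  qed
  moreover have "Lhd \<in> set u" using assms(3) lr(2) P(2) \<open>v = []\<close> by auto
  ultimately show thesis
    using that[OF lr(1) word_val_pos] lr(2,3) by (simp add: word_val_append)
qed

lemma rewrite_chain_traces_trajectory:
  assumes R: "R \<subseteq> SS" and f: "rewrite_chain R f" "no_inner_rhd (f 0)" "Lhd \<in> set (f 0)"
    and res: "\<And>l r a. (l, r) \<in> R \<inter> DS_rules \<Longrightarrow> foldl sym_val a l mod 8 \<noteq> c"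
  shows "\<exists>n. odd n \<and> nonconvergent n \<and> \<not> (\<exists>m. traj_contains n m \<and> m mod 8 = c)"
proof -
  have inv: "no_inner_rhd (f i) \<and> Lhd \<in> set (f i)" for i
    by (rule rewrite_chain_invariant[OF rewrite_chain_mono[OF f(1) R]])
      (use f rstep_SS_no_inner_rhd rstep_SS_invariants(5) in blast)+
  txt \<open>A- and B-steps keep the value and cannot go on forever, so \<open>D\<^sub>S\<close>-steps recur,
    and each of them applies S to the value.\<close>
  define D where "D i \<longleftrightarrow> rstep (R \<inter> DS_rules) (f i) (f (Suc i))" for i
  have "R \<subseteq> (A_rules \<union> B_rules) \<union> R \<inter> DS_rules" using R unfolding SS_def by blast
  then have AB: "rstep (A_rules \<union> B_rules) (f i) (f (Suc i))" if "\<not> D i" for i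
    using f(1) that rstep_mono rstep_Un unfolding rewrite_chain_def D_def by metis
  define Rel where "Rel a b \<longleftrightarrow> b = S a \<and> odd a \<and> a \<noteq> 1 \<and> a mod 8 \<noteq> c" for a b
  have D_Rel: "Rel (word_val (f i)) (word_val (f (Suc i)))" if Di: "D i" for i
  proof -
    obtain l r a where "(l, r) \<in> R \<inter> DS_rules" "1 \<le> a"
      "word_val (f i) = foldl sym_val a l" "word_val (f (Suc i)) = foldl sym_val a r"
      using rstep_DS_word_val Di inv[of i] unfolding D_def by blast
    then show ?thesis using DS_rule_simulates_S res unfolding Rel_def by auto
  qed
  have "\<forall>i. \<exists>j\<ge>i. D j"
  proof (rule ccontr)
    assume "\<not> (\<forall>i. \<exists>j\<ge>i. D j)"
    then obtain N where "\<forall>j\<ge>N. \<not> D j" by blast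
    then have "(f (Suc (N + i)), f (N + i)) \<in> measures [num_ter, bin_ter_inversions]" for i
      using AB A_B_step_decreases by simp
    then show False
      using no_descending_chain_measures[of "\<lambda>i. f (N + i)" "[num_ter, bin_ter_inversions]"] by simp
  qed
  then obtain t where "\<And>k. Rel (t k) (t (Suc k))"
    using stuttering_chain[of "\<lambda>i. word_val (f i)" Rel] D_Rel AB rstep_A_B_word_val by metis
  then show ?thesis using S_chain_nonconvergent[of t c] unfolding Rel_def by blast
qed

lemma terminating_if_trajectories_meet_residue:
  assumes R: "R \<subseteq> SS"
    and res: "\<And>l r a. (l, r) \<in> R \<inter> DS_rules \<Longrightarrow> foldl sym_val a l mod 8 \<noteq> c"
    and meet: "\<forall>n. odd n \<and> nonconvergent n \<longrightarrow> (\<exists>m. traj_contains n m \<and> m mod 8 = c)"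
  shows "terminating R"
proof (rule ccontr)
  assume "\<not> terminating R"
  then obtain f where f: "rewrite_chain R f" "no_inner_rhd (f 0)"
    using exists_rewrite_chain_no_inner_rhd[OF R] unfolding terminating_iff_no_rewrite_chain by blast
  show False
  proof (cases "Lhd \<in> set (f 0)")
    case True
    then show False using rewrite_chain_traces_trajectory[of R f c] R f res meet by blast
  qed (use Lhd_free_no_rewrite_chain[OF R f(1)] in blast)
qed

section \<open>Nonconvergent trajectories yield infinite rewrite sequences\<close>

lemma terminating_no_progressing_invariant:
  assumes "terminating R" and progress: "\<And>w. P w \<Longrightarrow> \<exists>w'. P w' \<and> (rstep R)\<^sup>+\<^sup>+ w w'"
  shows "\<not> P w"
proof -
  have "wfp (rstep R)\<inverse>\<inverse>"
    using assms(1) by (simp add: terminating_def wfp_def wf_iff_no_infinite_down_chain)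
  then have "wfp ((rstep R)\<^sup>+\<^sup>+)\<inverse>\<inverse>" by (metis wfp_tranclp tranclp_converse)
  then show ?thesis by (induction w rule: wfp_induct_rule) (use progress in blast)
qed

lemma absorb_ternary_digit:
  assumes AB: "A_rules \<union> B_rules \<subseteq> R"
  shows "set cs \<subseteq> {Z2, O2} \<Longrightarrow> t \<in> {Z3, O3, T3} \<Longrightarrow>
    \<exists>cs'. set cs' \<subseteq> {Z2, O2} \<and> (rstep R)\<^sup>*\<^sup>* (Lhd # cs @ t # rest) (Lhd # cs' @ rest)
      \<and> word_val (Lhd # cs') = word_val (Lhd # cs @ [t])"
proof (induction cs arbitrary: t rest rule: rev_induct)
  case Nil
  then obtain bs where bs: "([Lhd, t], Lhd # bs) \<in> B_rules" "set bs \<subseteq> {Z2, O2}"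
    by (auto simp: B_rules_def)
  have "rstep R ([] @ [Lhd, t] @ rest) ([] @ (Lhd # bs) @ rest)" using bs(1) AB by (blast intro: rstepI)
  moreover have "word_val (Lhd # bs) = word_val [Lhd, t]"
    using B_rule_props(2)[OF bs(1), of 0] by (simp add: word_val_def)
  ultimately show ?case using bs(2) by auto
next
  case (snoc b ds)
  obtain t' b' where tb: "([b, t], [t', b']) \<in> A_rules" "t' \<in> {Z3, O3, T3}" "b' \<in> {Z2, O2}"
    using snoc.prems by (auto simp: A_rules_def)
  have step: "rstep R ((Lhd # ds) @ [b, t] @ rest) ((Lhd # ds) @ [t', b'] @ rest)"
    using tb(1) AB by (blast intro: rstepI)
  obtain ds' where ds': "set ds' \<subseteq> {Z2, O2}" "(rstep R)\<^sup>*\<^sup>* (Lhd # ds @ t' # b' # rest) (Lhd # ds' @ b' # rest)"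
    "word_val (Lhd # ds') = word_val (Lhd # ds @ [t'])"
    using snoc.IH[OF _ tb(2), of "b' # rest"] snoc.prems(1) by auto
  have "word_val (Lhd # ds' @ [b']) = word_val (Lhd # ds @ [b, t])"
    using ds'(3) A_rule_props(4)[OF tb(1), of "word_val (Lhd # ds)"] by (simp add: word_val_Cons_append)
  then show ?case
    using step ds' tb(3) by (intro exI[of _ "ds' @ [b']"]) auto
qed

lemma absorb_ternary_digit_before_Rhd':
  assumes AB: "A_rules \<union> B_rules \<subseteq> R"
    and step: "rstep R w (Lhd # cs @ [t, Rhd'])" and cs: "set cs \<subseteq> {Z2, O2}" and t: "t \<in> {Z3, O3, T3}"
  shows "\<exists>bs'. set bs' \<subseteq> {Z2, O2} \<and> (rstep R)\<^sup>+\<^sup>+ w (Lhd # bs' @ [Rhd'])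
    \<and> word_val (Lhd # bs' @ [Rhd']) = word_val (Lhd # cs @ [t, Rhd'])"
proof -
  obtain bs' where bs': "set bs' \<subseteq> {Z2, O2}" "(rstep R)\<^sup>*\<^sup>* (Lhd # cs @ [t, Rhd']) (Lhd # bs' @ [Rhd'])"
    and val: "word_val (Lhd # bs') = word_val (Lhd # cs @ [t])"
    using absorb_ternary_digit[OF AB cs t, of "[Rhd']"] by auto
  have "word_val ((Lhd # bs') @ [Rhd']) = word_val ((Lhd # cs @ [t]) @ [Rhd'])"
    unfolding word_val_append[of _ "[Rhd']"] val ..
  then show ?thesis
    using bs' rtranclp_into_tranclp2[of "rstep R", OF step bs'(2)] by auto
qed

lemma binary_word_exists: "1 \<le> x \<Longrightarrow> \<exists>bs. set bs \<subseteq> {Z2, O2} \<and> word_val (Lhd # bs) = x"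
proof (induction x rule: less_induct)
  case (less x)
  show ?case
  proof (cases "x = 1")
    case False
    then have "1 \<le> x div 2" "x div 2 < x" using less.prems by auto
    then obtain bs where bs: "set bs \<subseteq> {Z2, O2}" "word_val (Lhd # bs) = x div 2"
      using less.IH by blast
    show ?thesis
      by (rule exI[of _ "bs @ [if even x then Z2 else O2]"]) (use bs in \<open>auto simp: word_val_Cons_append\<close>)
  qed (auto simp: word_val_Lhd_Cons intro: exI[of _ "[]"])
qed

lemma binary_word_suffix_cases:
  assumes "set bs \<subseteq> {Z2, O2}"
  obtains "bs = []" | "bs = [Z2]" | cs where "bs = cs @ [O2]" "set cs \<subseteq> {Z2, O2}"
    | cs where "bs = cs @ [O2, Z2]" "set cs \<subseteq> {Z2, O2}" | cs where "bs = cs @ [Z2, Z2]" "set cs \<subseteq> {Z2, O2}"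
proof (cases bs rule: rev_exhaust)
  case (snoc ds d)
  show thesis
  proof (cases "d = Z2")
    case True
    then show thesis using that assms snoc by (cases ds rule: rev_exhaust) auto
  qed (use that assms snoc in auto)
qed (use that in auto)

text \<open>The values 3 and 5 are excluded because their binary expansions are too short for the
  two-digit rules of \<open>D\<^sub>S\<close>.\<close>

lemma rewrite_simulates_S:
  assumes AB: "A_rules \<union> B_rules \<subseteq> R" and D3: "([O2, Rhd'], [T3, Rhd']) \<in> R"
    and D1: "c \<noteq> 1 \<Longrightarrow> ([Z2, Z2, Rhd'], [Z3, Rhd']) \<in> R"
    and D2: "c \<noteq> 5 \<Longrightarrow> ([O2, Z2, Rhd'], [Rhd']) \<in> R"
    and bs: "set bs \<subseteq> {Z2, O2}" and m: "word_val (Lhd # bs @ [Rhd']) = m" "m \<notin> {3, 5}" "m mod 8 \<noteq> c"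
  shows "\<exists>bs'. set bs' \<subseteq> {Z2, O2} \<and> (rstep R)\<^sup>+\<^sup>+ (Lhd # bs @ [Rhd']) (Lhd # bs' @ [Rhd'])
    \<and> word_val (Lhd # bs' @ [Rhd']) = S m"
  using bs
proof (cases rule: binary_word_suffix_cases)
  case (3 cs)
  define a where "a = word_val (Lhd # cs)"
  have m_eq: "m = 4 * a + 3" using m(1) 3(1) by (simp add: word_val_Cons_append a_def)
  have "rstep R ((Lhd # cs) @ [O2, Rhd'] @ []) ((Lhd # cs) @ [T3, Rhd'] @ [])"
    using D3 by (rule rstepI)
  moreover have "word_val (Lhd # cs @ [T3, Rhd']) = S m"
    unfolding m_eq S_4a_plus_3 by (simp add: word_val_Cons_append a_def)
  ultimately show ?thesis
    using absorb_ternary_digit_before_Rhd'[OF AB _ 3(2), of _ T3] 3(1) by auto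
next
  case (4 cs)
  define a where "a = word_val (Lhd # cs)"
  have m_eq: "m = 8 * a + 5" using m(1) 4(1) by (simp add: word_val_Cons_append a_def)
  have "rstep R ((Lhd # cs) @ [O2, Z2, Rhd'] @ []) ((Lhd # cs) @ [Rhd'] @ [])"
    using D2 m(3) m_eq by (intro rstepI) auto
  moreover have "word_val (Lhd # cs @ [Rhd']) = S m"
    unfolding m_eq S_8a_plus_5 by (simp add: word_val_Cons_append a_def)
  ultimately show ?thesis using 4 by auto
next
  case (5 cs)
  define a where "a = word_val (Lhd # cs)"
  have m_eq: "m = 8 * a + 1" using m(1) 5(1) by (simp add: word_val_Cons_append a_def)
  have "rstep R ((Lhd # cs) @ [Z2, Z2, Rhd'] @ []) ((Lhd # cs) @ [Z3, Rhd'] @ [])"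
    using D1 m(3) m_eq by (intro rstepI) auto
  moreover have "word_val (Lhd # cs @ [Z3, Rhd']) = S m"
    unfolding m_eq S_8a_plus_1 by (simp add: word_val_Cons_append a_def)
  ultimately show ?thesis
    using absorb_ternary_digit_before_Rhd'[OF AB _ 5(2), of _ Z3] 5(1) by auto
qed (use m in \<open>auto simp: word_val_Lhd_Cons\<close>)

lemma trajectories_meet_residue_if_terminating:
  assumes AB: "A_rules \<union> B_rules \<subseteq> R" and D3: "([O2, Rhd'], [T3, Rhd']) \<in> R"
    and D1: "c \<noteq> 1 \<Longrightarrow> ([Z2, Z2, Rhd'], [Z3, Rhd']) \<in> R"
    and D2: "c \<noteq> 5 \<Longrightarrow> ([O2, Z2, Rhd'], [Rhd']) \<in> R"
    and T: "terminating R"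
  shows "\<forall>n. odd n \<and> nonconvergent n \<longrightarrow> (\<exists>m. traj_contains n m \<and> m mod 8 = c)"
proof (intro allI impI; rule ccontr)
  fix n assume n: "odd n \<and> nonconvergent n" and avoid: "\<not> (\<exists>m. traj_contains n m \<and> m mod 8 = c)"
  define P where "P w \<longleftrightarrow> (\<exists>bs k. set bs \<subseteq> {Z2, O2} \<and> w = Lhd # bs @ [Rhd'] \<and> word_val w = (S ^^ k) n)"
    for w
  have "n \<noteq> 1" using n nonconvergent_not_1_3_5 by blast
  with n have "1 \<le> n div 2" by (auto elim!: oddE)
  then obtain bs where bs: "set bs \<subseteq> {Z2, O2}" "word_val (Lhd # bs) = n div 2"
    using binary_word_exists by blast
  then have "P (Lhd # bs @ [Rhd'])"
    unfolding P_def using n by (intro exI[of _ bs] exI[of _ 0]) (auto simp: word_val_Cons_append)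
  moreover have "\<exists>w'. P w' \<and> (rstep R)\<^sup>+\<^sup>+ w w'" if "P w" for w
  proof -
    obtain bs k where bs: "set bs \<subseteq> {Z2, O2}" "w = Lhd # bs @ [Rhd']" "word_val w = (S ^^ k) n"
      using \<open>P w\<close> unfolding P_def by blast
    have "(S ^^ k) n \<notin> {3, 5}" using nonconvergent_not_1_3_5 nonconvergent_funpow n by blast
    moreover have "(S ^^ k) n mod 8 \<noteq> c" using avoid unfolding traj_contains_def by blast
    ultimately obtain bs' where "set bs' \<subseteq> {Z2, O2}" "(rstep R)\<^sup>+\<^sup>+ w (Lhd # bs' @ [Rhd'])"
      "word_val (Lhd # bs' @ [Rhd']) = (S ^^ Suc k) n"
      using rewrite_simulates_S[where c = c and m = "(S ^^ k) n", OF AB D3 D1 D2 bs(1)] bs(2,3) by auto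
    then show ?thesis unfolding P_def by blast
  qed
  ultimately show False using terminating_no_progressing_invariant[OF T] by blast
qed

theorem mainTheorem12:
  shows "(terminating SS1 \<longleftrightarrow>
            (\<forall>n. odd n \<and> nonconvergent n \<longrightarrow> (\<exists>m. traj_contains n m \<and> m mod 8 = 1)))
       \<and> (terminating SS2 \<longleftrightarrow>
            (\<forall>n. odd n \<and> nonconvergent n \<longrightarrow> (\<exists>m. traj_contains n m \<and> m mod 8 = 5)))"
proof -
  have SS1: "SS1 \<subseteq> SS" "A_rules \<union> B_rules \<subseteq> SS1" "([O2, Rhd'], [T3, Rhd']) \<in> SS1"
    "([O2, Z2, Rhd'], [Rhd']) \<in> SS1" "([Z2, Z2, Rhd'], [Z3, Rhd']) \<notin> SS1"
    and SS2: "SS2 \<subseteq> SS" "A_rules \<union> B_rules \<subseteq> SS2" "([O2, Rhd'], [T3, Rhd']) \<in> SS2"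
    "([Z2, Z2, Rhd'], [Z3, Rhd']) \<in> SS2" "([O2, Z2, Rhd'], [Rhd']) \<notin> SS2"
    by (auto simp: SS1_def SS2_def SS_def A_rules_def B_rules_def DS_rules_def)
  have res1: "foldl sym_val a l mod 8 \<noteq> 1" if "(l, r) \<in> SS1 \<inter> DS_rules" for l r a
    using DS_rule_residue(1)[of l r a] SS1(5) that by auto
  have res2: "foldl sym_val a l mod 8 \<noteq> 5" if "(l, r) \<in> SS2 \<inter> DS_rules" for l r a
    using DS_rule_residue(2)[of l r a] SS2(5) that by auto
  show ?thesis
  proof (intro conjI iffI)
    show "\<forall>n. odd n \<and> nonconvergent n \<longrightarrow> (\<exists>m. traj_contains n m \<and> m mod 8 = 1)" if "terminating SS1"
      using trajectories_meet_residue_if_terminating[OF SS1(2,3) _ SS1(4) that] by simp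
    show "\<forall>n. odd n \<and> nonconvergent n \<longrightarrow> (\<exists>m. traj_contains n m \<and> m mod 8 = 5)" if "terminating SS2"
      using trajectories_meet_residue_if_terminating[OF SS2(2,3) SS2(4) _ that] by simp
    show "terminating SS1" if "\<forall>n. odd n \<and> nonconvergent n \<longrightarrow> (\<exists>m. traj_contains n m \<and> m mod 8 = 1)"
      by (rule terminating_if_trajectories_meet_residue[OF SS1(1) res1 that])
    show "terminating SS2" if "\<forall>n. odd n \<and> nonconvergent n \<longrightarrow> (\<exists>m. traj_contains n m \<and> m mod 8 = 5)"
      by (rule terminating_if_trajectories_meet_residue[OF SS2(1) res2 that])
  qed
qed

end
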